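(* Let $w = w_1 w_2 w_3 \cdots$ be any infinite binary word, and define $$r_{\inf}(w) = \liminf_{n \to \infty} \frac{|Z(w^{(n)})|}{n},\quad r_{\sup}(w) = \limsup_{n \to \infty} \frac{|Z(w^{(n)})|}{n},$$ $$R_{\inf}(w) = \liminf_{n \to \infty} \frac{|P(w^{(n)})|}{n},\quad R_{\sup}(w) = \limsup_{n \to \infty} \frac{|P(w^{(n)})|}{n}.$$ Then $$\frac{5 r_{\inf}(w) - 2}{3} \leq R_{\inf}(w) \leq r_{\inf}(w) \quad\text{and}\quad \frac{5 r_{\sup}(w) - 2}{3} \leq R_{\sup}(w) \leq r_{\sup}(w).$$ Moreover, for every real number $2/5 \leq r \leq 1$ there exists an infinite binary word $w$ with $r_{\inf}(w) = r_{\sup}(w) = r$ and $R_{\inf}(w) = R_{\sup}(w) = (5r-2)/3$; and for every real number $0 \leq r \leq 1$ there exists an infinite binary word $w$ with $r_{\inf}(w) = r_{\sup}(w) = r$ and $R_{\inf}(w) = R_{\sup}(w) = r$.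
   Context: For a finite or infinite binary word $w = w_1 w_2 \cdots$ ($w_i \in \{0,1\}$), $\ell(w)$ is its length and $w^{(n)}$ denotes its initial subword of length $n$. $Z(w)$ is the set of indices $i$ with $w_i = 0$. $P(w)$ is the set of indices $i \geq 2$ such that at least one of the following holds: (i) $\ell(w) \geq i$ and $w_{i-1} w_i = 00$; (ii) $\ell(w) \geq i+2$ and $w_{i-1} w_i w_{i+1} w_{i+2} = 0100$; (iii) $\ell(w) \geq i+3$ and $w_{i-1} w_i w_{i+1} w_{i+2} w_{i+3} = 01010$. *)

theory Defs
  imports Complex_Main "HOL-Library.Extended_Real" "HOL-Library.Liminf_Limsup"
begin

(* An infinite binary word w = w_1 w_2 w_3 ... is modelled as w :: nat => bool,
   with letter w_i = 1 iff w i = True and w_i = 0 iff w i = False.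
   Only positions i >= 1 are used; the value w 0 is irrelevant. *)

definition zero_at :: "(nat \<Rightarrow> bool) \<Rightarrow> nat \<Rightarrow> bool" where
  "zero_at w i \<longleftrightarrow> \<not> w i"

definition Zpre :: "(nat \<Rightarrow> bool) \<Rightarrow> nat \<Rightarrow> nat set" where
  "Zpre w n = {i. 1 \<le> i \<and> i \<le> n \<and> zero_at w i}"

definition Ppre :: "(nat \<Rightarrow> bool) \<Rightarrow> nat \<Rightarrow> nat set" where
  "Ppre w n = {i. 2 \<le> i \<and>
     ((i \<le> n \<and> zero_at w (i-1) \<and> zero_at w i)
    \<or> (i + 2 \<le> n \<and> zero_at w (i-1) \<and> \<not> zero_at w i \<and> zero_at w (i+1) \<and> zero_at w (i+2))
    \<or> (i + 3 \<le> n \<and> zero_at w (i-1) \<and> \<not> zero_at w i \<and> zero_at w (i+1)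
          \<and> \<not> zero_at w (i+2) \<and> zero_at w (i+3)))}"

definition r_inf :: "(nat \<Rightarrow> bool) \<Rightarrow> ereal" where
  "r_inf w = liminf (\<lambda>n. ereal (real (card (Zpre w n)) / real n))"
definition r_sup :: "(nat \<Rightarrow> bool) \<Rightarrow> ereal" where
  "r_sup w = limsup (\<lambda>n. ereal (real (card (Zpre w n)) / real n))"
definition R_inf :: "(nat \<Rightarrow> bool) \<Rightarrow> ereal" where
  "R_inf w = liminf (\<lambda>n. ereal (real (card (Ppre w n)) / real n))"
definition R_sup :: "(nat \<Rightarrow> bool) \<Rightarrow> ereal" where
  "R_sup w = limsup (\<lambda>n. ereal (real (card (Ppre w n)) / real n))"

end

theory Submission
  imports Defs "HOL-Analysis.Extended_Real_Limits" "HOL-Analysis.Elementary_Normed_Spaces"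
    "HOL-Library.Discrete_Functions"
begin

text \<open>Every \<open>i \<in> P\<close> has \<open>w (i - 1) = 0\<close>, so \<open>|P| \<le> |Z|\<close>. Conversely, a zero at \<open>j\<close> is
  followed by a \<open>P\<close>-pattern at \<open>j + 1\<close> unless, away from the end of the prefix, it starts
  \<open>011\<close> or \<open>01011\<close>; these occurrences supply at least \<open>3/2\<close> ones per such zero, which
  gives \<open>5|Z| \<le> 3|P| + 2n + 12\<close> and, after dividing by \<open>n\<close>, both density inequalities.

  The lower bound is attained by a concatenation of blocks \<open>00000\<close> and \<open>01011\<close>, the first kind
  occurring with frequency \<open>(5r - 2)/3\<close> along a Beatty sequence: a block \<open>01011\<close> contains
  no position of \<open>P\<close>. The upper bound is attained by filling the interval between consecutive
  squares with a run of zeros followed by ones: a prefix of length \<open>n\<close> has only \<open>O(\<surd>n)\<close>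
  runs, and every zero other than the last of its run is followed by a position of \<open>P\<close>.\<close>

section \<open>Counting zeros and pattern positions in prefixes\<close>

lemma finite_Zpre [simp]: "finite (Zpre w n)"
  by (rule finite_subset[of _ "{..n}"]) (auto simp: Zpre_def)

lemma finite_Ppre [simp]: "finite (Ppre w n)"
  by (rule finite_subset[of _ "{..n}"]) (auto simp: Ppre_def)

lemma card_Zpre_plus_ones: "card (Zpre w n) + card {k. 1 \<le> k \<and> k \<le> n \<and> w k} = n"
proof -
  have "Zpre w n \<union> {k. 1 \<le> k \<and> k \<le> n \<and> w k} = {1..n}"
    "Zpre w n \<inter> {k. 1 \<le> k \<and> k \<le> n \<and> w k} = {}"
    by (auto simp: Zpre_def zero_at_def)
  then show ?thesis
    using card_Un_disjoint[of "Zpre w n" "{k. 1 \<le> k \<and> k \<le> n \<and> w k}"] by simp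
qed

lemma card_Zpre_le: "card (Zpre w n) \<le> n"
  using card_Zpre_plus_ones[of w n] by linarith

lemma card_Zpre_mono: "m \<le> n \<Longrightarrow> card (Zpre w m) \<le> card (Zpre w n)"
  by (rule card_mono) (auto simp: Zpre_def)

lemma card_Collect_le_add:
  fixes Q :: "nat \<Rightarrow> bool"
  shows "card {j. 1 \<le> j \<and> j \<le> m + k \<and> Q j}
     = card {j. 1 \<le> j \<and> j \<le> m \<and> Q j} + card {t. t < k \<and> Q (m + t + 1)}"
proof -
  have split: "{j. 1 \<le> j \<and> j \<le> m + k \<and> Q j}
      = {j. 1 \<le> j \<and> j \<le> m \<and> Q j} \<union> (\<lambda>t. m + t + 1) ` {t. t < k \<and> Q (m + t + 1)}"
  proof (intro set_eqI iffI)
    fix j assume "j \<in> {j. 1 \<le> j \<and> j \<le> m + k \<and> Q j}"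
    then show "j \<in> {j. 1 \<le> j \<and> j \<le> m \<and> Q j} \<union> (\<lambda>t. m + t + 1) ` {t. t < k \<and> Q (m + t + 1)}"
      by (cases "j \<le> m") (auto intro!: image_eqI[of j _ "j - m - 1"])
  qed auto
  have "card ((\<lambda>t. m + t + 1) ` {t. t < k \<and> Q (m + t + 1)}) = card {t. t < k \<and> Q (m + t + 1)}"
    by (rule card_image) (simp add: inj_on_def)
  then show ?thesis
    unfolding split by (subst card_Un_disjoint) (auto intro: finite_subset[of _ "{..m + k}"])
qed

lemma card_Zpre_add_le: "card (Zpre w (m + k)) \<le> card (Zpre w m) + k"
proof -
  have "card {t. t < k \<and> zero_at w (m + t + 1)} \<le> k"
    using card_mono[of "{..<k}" "{t. t < k \<and> zero_at w (m + t + 1)}"] by auto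
  then show ?thesis
    unfolding Zpre_def card_Collect_le_add by simp
qed

lemma Zpre_deviation_le:
  fixes r :: real
  assumes "m \<le> n" "0 \<le> r" "r \<le> 1"
  shows "\<bar>real (card (Zpre w n)) - r * n\<bar> \<le> \<bar>real (card (Zpre w m)) - r * m\<bar> + real (n - m)"
proof -
  have "card (Zpre w m) \<le> card (Zpre w n)" "card (Zpre w n) \<le> card (Zpre w m) + (n - m)"
    using assms(1) card_Zpre_mono card_Zpre_add_le[of w m "n - m"] by simp_all
  moreover have "r * m \<le> r * n" "r * n - r * m \<le> real (n - m)"
    using assms by (simp_all add: mult_left_mono mult_left_le_one_le flip: right_diff_distrib of_nat_diff)
  ultimately show ?thesis by linarith
qed

lemma Ppre_pred_in_Zpre: "i \<in> Ppre w n \<Longrightarrow> i - 1 \<in> Zpre w n \<and> i = Suc (i - 1)"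
  by (auto simp: Ppre_def Zpre_def)

lemma card_Ppre_le_card_Zpre: "card (Ppre w n) \<le> card (Zpre w n)"
proof -
  have "Ppre w n \<subseteq> Suc ` Zpre w n"
    using Ppre_pred_in_Zpre by (metis image_eqI subsetI)
  then show ?thesis
    by (metis card_image_le card_mono finite_Zpre finite_imageI le_trans)
qed

lemma card_Zpre_le_card_Ppre_plus_unmatched:
  "card (Zpre w n) \<le> card (Ppre w n) + card {j \<in> Zpre w n. Suc j \<notin> Ppre w n}"
proof -
  let ?U = "{j \<in> Zpre w n. Suc j \<notin> Ppre w n}"
  have "Suc ` (Zpre w n - ?U) \<subseteq> Ppre w n" by auto
  then have "card (Zpre w n - ?U) \<le> card (Ppre w n)"
    by (intro card_inj_on_le) auto
  moreover have "card (Zpre w n) \<le> card (Zpre w n - ?U) + card ?U"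
    by (simp add: card_Diff_subset card_mono)
  ultimately show ?thesis by linarith
qed

lemma card_Zpre_le_card_Ppre_plus_ascents:
  "card (Zpre w n) \<le> card (Ppre w n) + 1 + card {j. 1 \<le> j \<and> j < n \<and> \<not> w j \<and> w (Suc j)}"
proof -
  let ?A = "{j. 1 \<le> j \<and> j < n \<and> \<not> w j \<and> w (Suc j)}"
  have "{j \<in> Zpre w n. Suc j \<notin> Ppre w n} \<subseteq> insert n ?A"
    by (auto simp: Zpre_def Ppre_def zero_at_def)
  then have "card {j \<in> Zpre w n. Suc j \<notin> Ppre w n} \<le> card (insert n ?A)"
    by (intro card_mono) auto
  also have "\<dots> \<le> card ?A + 1"
    by (simp add: card_insert_if)
  finally show ?thesis
    using card_Zpre_le_card_Ppre_plus_unmatched[of w n] by linarith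
qed

lemma unmatched_zero_continuation:
  assumes "j \<in> Zpre w n" "Suc j \<notin> Ppre w n" "j + 4 \<le> n"
  shows "w (j+1) \<and> (w (j+2) \<or> \<not> w (j+2) \<and> w (j+3) \<and> w (j+4))"
  using assms by (auto simp: Zpre_def Ppre_def zero_at_def eval_nat_numeral)

lemma card_starts_011_01011:
  fixes w :: "nat \<Rightarrow> bool" and n :: nat
  defines "A \<equiv> {j. 1 \<le> j \<and> j+2 \<le> n \<and> \<not> w j \<and> w (j+1) \<and> w (j+2)}"
    and "B \<equiv> {j. 1 \<le> j \<and> j+4 \<le> n \<and> \<not> w j \<and> w (j+1) \<and> \<not> w (j+2) \<and> w (j+3) \<and> w (j+4)}"
  shows "card B \<le> card A" and "2 * card A + card B \<le> n - card (Zpre w n)"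
proof -
  have fin: "finite A" "finite B"
    by (auto simp: A_def B_def intro: finite_subset[of _ "{..n}"])
  show "card B \<le> card A"
    using fin by (intro card_inj_on_le[of "\<lambda>j. j+2"]) (auto simp: A_def B_def inj_on_def eval_nat_numeral)
  text \<open>The ones after a start of \<open>011\<close> and the first one after a start of \<open>01011\<close> are
    pairwise distinct positions.\<close>
  let ?ones = "Suc ` A \<union> (\<lambda>j. j+2) ` A \<union> Suc ` B"
  have "card ?ones = 2 * card A + card B"
  proof -
    have "Suc ` A \<inter> (\<lambda>j. j+2) ` A = {}" "(Suc ` A \<union> (\<lambda>j. j+2) ` A) \<inter> Suc ` B = {}"
      by (auto simp: A_def B_def eval_nat_numeral)
    with fin show ?thesis
      by (simp add: card_Un_disjoint card_image inj_on_def)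
  qed
  moreover have "?ones \<subseteq> {k. 1 \<le> k \<and> k \<le> n \<and> w k}"
    by (auto simp: A_def B_def eval_nat_numeral)
  then have "card ?ones \<le> card {k. 1 \<le> k \<and> k \<le> n \<and> w k}"
    by (intro card_mono) auto
  ultimately show "2 * card A + card B \<le> n - card (Zpre w n)"
    using card_Zpre_plus_ones[of w n] by linarith
qed

lemma five_card_Zpre_le: "5 * card (Zpre w n) \<le> 3 * card (Ppre w n) + 2 * n + 12"
proof -
  define A where "A = {j. 1 \<le> j \<and> j+2 \<le> n \<and> \<not> w j \<and> w (j+1) \<and> w (j+2)}"
  define B where "B = {j. 1 \<le> j \<and> j+4 \<le> n \<and> \<not> w j \<and> w (j+1) \<and> \<not> w (j+2) \<and> w (j+3) \<and> w (j+4)}"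
  define E where "E = {n-3..n}"
  have fin: "finite A" "finite B" "finite E"
    by (auto simp: A_def B_def E_def intro: finite_subset[of _ "{..n}"])
  have "{j \<in> Zpre w n. Suc j \<notin> Ppre w n} \<subseteq> E \<union> A \<union> B"
  proof
    fix j assume j: "j \<in> {j \<in> Zpre w n. Suc j \<notin> Ppre w n}"
    then have "1 \<le> j" "j \<le> n" "\<not> w j" by (auto simp: Zpre_def zero_at_def)
    with j unmatched_zero_continuation[of j w n] show "j \<in> E \<union> A \<union> B"
      by (cases "j + 4 \<le> n") (auto simp: A_def B_def E_def)
  qed
  then have "card {j \<in> Zpre w n. Suc j \<notin> Ppre w n} \<le> card E + card A + card B"
    using fin by (meson card_Un_le card_mono finite_UnI le_trans add_right_mono)
  moreover have "card E \<le> 4"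
    by (simp add: E_def)
  ultimately show ?thesis
    using card_Zpre_le_card_Ppre_plus_unmatched[of w n] card_starts_011_01011[of n w] card_Zpre_le[of w n]
    unfolding A_def B_def by linarith
qed

section \<open>Lower and upper densities\<close>

lemma Liminf_ereal_affine:
  assumes "F \<noteq> bot" "0 \<le> c"
  shows "Liminf F (\<lambda>n. ereal (c * f n + d)) = ereal c * Liminf F (\<lambda>n. ereal (f n)) + ereal d"
proof -
  have "Liminf F (\<lambda>n. ereal c * ereal (f n) + ereal d) = Liminf F (\<lambda>n. ereal c * ereal (f n)) + ereal d"
    using assms(1) by (rule Liminf_add_ereal_right) simp
  with Liminf_ereal_mult_left[OF assms, of "\<lambda>n. ereal (f n)"] show ?thesis by simp
qed

lemma Limsup_ereal_affine:
  assumes "F \<noteq> bot" "0 \<le> c"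
  shows "Limsup F (\<lambda>n. ereal (c * f n + d)) = ereal c * Limsup F (\<lambda>n. ereal (f n)) + ereal d"
proof -
  have "Limsup F (\<lambda>n. ereal c * ereal (f n) + ereal d) = Limsup F (\<lambda>n. ereal c * ereal (f n)) + ereal d"
    using assms(1) by (rule Limsup_add_ereal_right) simp
  with Limsup_ereal_mult_left[OF assms, of "\<lambda>n. ereal (f n)"] show ?thesis by simp
qed

lemma ereal_five_thirds_affine: "(5 * L - 2) / 3 = ereal (5/3) * L + ereal (-2/3)"
  by (cases L) (simp_all add: divide_ereal_def)

lemma liminf_mono_up_to_null:
  fixes x y e :: "nat \<Rightarrow> real"
  assumes "\<And>n. x n \<le> y n + e n" "e \<longlonglongrightarrow> 0"
  shows "liminf (\<lambda>n. ereal (x n)) \<le> liminf (\<lambda>n. ereal (y n))"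
proof -
  have "liminf (\<lambda>n. ereal (x n)) \<le> liminf (\<lambda>n. ereal (e n) + ereal (y n))"
    using assms(1) by (intro Liminf_mono) (simp add: add.commute)
  also have "\<dots> = liminf (\<lambda>n. ereal (y n))"
    by (rule ereal_liminf_lim_add[of _ 0, simplified]) (use assms(2) in \<open>simp add: zero_ereal_def\<close>)
  finally show ?thesis .
qed

lemma limsup_mono_up_to_null:
  fixes x y e :: "nat \<Rightarrow> real"
  assumes "\<And>n. x n \<le> y n + e n" "e \<longlonglongrightarrow> 0"
  shows "limsup (\<lambda>n. ereal (x n)) \<le> limsup (\<lambda>n. ereal (y n))"
proof -
  have "limsup (\<lambda>n. ereal (x n)) \<le> limsup (\<lambda>n. ereal (e n) + ereal (y n))"
    using assms(1) by (intro Limsup_mono) (simp add: add.commute)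
  also have "\<dots> = limsup (\<lambda>n. ereal (y n))"
    by (rule ereal_limsup_lim_add[of _ 0, simplified]) (use assms(2) in \<open>simp add: zero_ereal_def\<close>)
  finally show ?thesis .
qed

lemma ratio_limits_eq:
  fixes f g :: "nat \<Rightarrow> real" and r :: real
  assumes "\<And>n. n \<ge> 1 \<Longrightarrow> \<bar>f n - r * n\<bar> \<le> g n" and "(\<lambda>n. g n / n) \<longlonglongrightarrow> 0"
  shows "liminf (\<lambda>n. ereal (f n / n)) = ereal r" and "limsup (\<lambda>n. ereal (f n / n)) = ereal r"
proof -
  have "\<bar>f n / n - r\<bar> \<le> g n / n" if "n \<ge> 1" for n
  proof -
    have "f n / n - r = (f n - r * n) / n"
      using that by (simp add: field_simps)
    then have "\<bar>f n / n - r\<bar> = \<bar>f n - r * n\<bar> / n"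
      by simp
    with assms(1)[OF that] show ?thesis by (simp add: divide_right_mono)
  qed
  then have "eventually (\<lambda>n. norm (f n / n - r) \<le> g n / n) sequentially"
    by (intro eventually_sequentiallyI[where c = 1]) simp
  then have "(\<lambda>n. f n / n - r) \<longlonglongrightarrow> 0"
    using assms(2) by (rule Lim_null_comparison)
  then have "(\<lambda>n. ereal (f n / n)) \<longlonglongrightarrow> ereal r"
    by (rule tendsto_ereal[OF LIM_zero_cancel])
  then show "liminf (\<lambda>n. ereal (f n / n)) = ereal r" "limsup (\<lambda>n. ereal (f n / n)) = ereal r"
    by (simp_all add: lim_imp_Liminf lim_imp_Limsup)
qed

lemma sqrt_over_n_tendsto_0: "(\<lambda>n. c * sqrt (real n) / real n) \<longlonglongrightarrow> 0"
proof -
  have "c * sqrt (real n) / real n = c / sqrt (real n)" for n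
    by (cases "n = 0") (simp_all add: field_simps real_div_sqrt)
  moreover have "(\<lambda>n. c / sqrt (real n)) \<longlonglongrightarrow> 0"
    by (intro tendsto_divide_0[OF tendsto_const] filterlim_at_top_imp_at_infinity
        filterlim_compose[OF sqrt_at_top] filterlim_real_sequentially)
  ultimately show ?thesis
    by simp
qed

lemma density_bounds:
  "(5 * r_inf w - 2) / 3 \<le> R_inf w \<and> R_inf w \<le> r_inf w \<and>
   (5 * r_sup w - 2) / 3 \<le> R_sup w \<and> R_sup w \<le> r_sup w"
proof -
  define z where "z n = real (card (Zpre w n)) / real n" for n
  define p where "p n = real (card (Ppre w n)) / real n" for n
  have p_le_z: "p n \<le> z n" for n
    unfolding p_def z_def by (rule divide_right_mono) (simp_all add: card_Ppre_le_card_Zpre)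
  have z_le_p: "5/3 * z n + -2/3 \<le> p n + 4 / real n" for n
  proof (cases "n = 0")
    case False
    have "5 * real (card (Zpre w n)) \<le> 3 * real (card (Ppre w n)) + 2 * real n + 12"
      using five_card_Zpre_le[of w n] by (simp only: of_nat_le_iff [symmetric] of_nat_add of_nat_mult)
    then have "real n * (5 * real (card (Zpre w n)))
        \<le> real n * (3 * real (card (Ppre w n)) + 2 * real n + 12)"
      by (rule mult_left_mono) simp
    with False show ?thesis by (simp add: z_def p_def field_simps)
  qed (simp add: z_def p_def)
  have null: "(\<lambda>n. 4 / real n) \<longlonglongrightarrow> 0" by (rule lim_const_over_n)
  have "(5 * r_inf w - 2) / 3 = liminf (\<lambda>n. ereal (5/3 * z n + -2/3))"
    unfolding ereal_five_thirds_affine r_inf_def z_def by (rule Liminf_ereal_affine[symmetric]) simp_all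
  moreover have "(5 * r_sup w - 2) / 3 = limsup (\<lambda>n. ereal (5/3 * z n + -2/3))"
    unfolding ereal_five_thirds_affine r_sup_def z_def by (rule Limsup_ereal_affine[symmetric]) simp_all
  moreover have "liminf (\<lambda>n. ereal (5/3 * z n + -2/3)) \<le> R_inf w"
    unfolding R_inf_def p_def[symmetric] by (rule liminf_mono_up_to_null[OF z_le_p null])
  moreover have "limsup (\<lambda>n. ereal (5/3 * z n + -2/3)) \<le> R_sup w"
    unfolding R_sup_def p_def[symmetric] by (rule limsup_mono_up_to_null[OF z_le_p null])
  moreover have "R_inf w \<le> r_inf w" "R_sup w \<le> r_sup w"
    unfolding R_inf_def r_inf_def R_sup_def r_sup_def p_def[symmetric] z_def[symmetric]
    using p_le_z by (simp_all add: Liminf_mono Limsup_mono)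
  ultimately show ?thesis by simp
qed

section \<open>A word attaining the lower bound\<close>

definition floor_jump :: "real \<Rightarrow> nat \<Rightarrow> bool" where
  "floor_jump a m \<longleftrightarrow> \<lfloor>a * real (Suc m)\<rfloor> \<noteq> \<lfloor>a * real m\<rfloor>"

lemma floor_mult_Suc:
  assumes "0 \<le> a" "a \<le> 1"
  shows "\<lfloor>a * real (Suc m)\<rfloor> = \<lfloor>a * real m\<rfloor> + (if floor_jump a m then 1 else 0)"
proof -
  have "\<lfloor>a * real m\<rfloor> \<le> \<lfloor>a * real (Suc m)\<rfloor>"
    using assms by (intro floor_mono mult_left_mono) auto
  moreover have "\<lfloor>a * real (Suc m)\<rfloor> \<le> \<lfloor>a * real m + 1\<rfloor>"
    using assms by (intro floor_mono) (simp add: algebra_simps)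
  ultimately show ?thesis
    unfolding floor_jump_def by auto
qed

text \<open>Block \<open>m\<close>, i.e. positions \<open>5m+1, \<dots>, 5m+5\<close>, reads \<open>00000\<close> if \<open>floor_jump a m\<close> and
  \<open>01011\<close> otherwise; a proportion \<open>a\<close> of the blocks are of the first kind.\<close>
definition extremal_word :: "real \<Rightarrow> nat \<Rightarrow> bool" where
  "extremal_word a i \<longleftrightarrow> \<not> floor_jump a ((i - 1) div 5) \<and> (i - 1) mod 5 \<in> {1, 3, 4}"

lemma extremal_word_block:
  "t < 5 \<Longrightarrow> extremal_word a (Suc (5 * m + t)) \<longleftrightarrow> \<not> floor_jump a m \<and> t \<in> {1, 3, 4}"
  by (simp add: extremal_word_def)

lemma card_Zpre_extremal_word:
  assumes "0 \<le> a" "a \<le> 1"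
  shows "int (card (Zpre (extremal_word a) (5 * M))) = 2 * int M + 3 * \<lfloor>a * real M\<rfloor>"
proof (induction M)
  case (Suc M)
  have "{t. t < 5 \<and> zero_at (extremal_word a) (5 * M + t + 1)}
      = {t. t < 5 \<and> (floor_jump a M \<or> t \<notin> {1, 3, 4})}"
    by (simp add: zero_at_def extremal_word_block cong: conj_cong)
  also have "\<dots> = (if floor_jump a M then {0, 1, 2, 3, 4} else {0, 2})"
    by auto
  finally have "card {t. t < 5 \<and> zero_at (extremal_word a) (5 * M + t + 1)}
      = (if floor_jump a M then 5 else 2)"
    by simp
  then show ?case
    using Suc floor_mult_Suc[OF assms, of M]
    unfolding Zpre_def mult_Suc_right add.commute[of 5] card_Collect_le_add by simp
qed (simp add: Zpre_def)

lemma Ppre_extremal_word_floor_jump: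
  assumes "i \<in> Ppre (extremal_word a) n"
  shows "floor_jump a ((i - 2) div 5)"
proof (rule ccontr)
  define m t where "m = (i - 2) div 5" and "t = (i - 2) mod 5"
  assume "\<not> floor_jump a ((i - 2) div 5)"
  then have block: "extremal_word a (Suc (5 * m + s)) \<longleftrightarrow> s \<in> {1, 3, 4}" if "s < 5" for s
    using that by (simp add: m_def extremal_word_block)
  have "2 \<le> i" using assms by (simp add: Ppre_def)
  then have i: "i = 5 * m + t + 2" by (simp add: m_def t_def)
  have "t < 5" by (simp add: t_def)
  then have "t \<in> {0, 1, 2, 3, 4}" by auto
  then show False
    using assms block[of 0] block[of 1] block[of 2] block[of 3] block[of 4]
    by (auto simp: Ppre_def zero_at_def i eval_nat_numeral)
qed

lemma card_floor_jump_blocks: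
  assumes "0 \<le> a" "a \<le> 1"
  shows "int (card {j. 1 \<le> j \<and> j \<le> 5 * M \<and> floor_jump a ((j - 1) div 5)}) = 5 * \<lfloor>a * real M\<rfloor>"
proof (induction M)
  case (Suc M)
  have "{t. t < 5 \<and> floor_jump a ((5 * M + t + 1 - 1) div 5)} = {t. t < 5 \<and> floor_jump a M}"
    by (simp cong: conj_cong)
  then have "card {t. t < 5 \<and> floor_jump a ((5 * M + t + 1 - 1) div 5)} = (if floor_jump a M then 5 else 0)"
    by simp
  then show ?case
    using Suc floor_mult_Suc[OF assms, of M]
    unfolding mult_Suc_right add.commute[of 5] card_Collect_le_add by simp
qed simp

lemma card_Ppre_extremal_word_le:
  assumes "0 \<le> a" "a \<le> 1"
  shows "real (card (Ppre (extremal_word a) n)) \<le> a * n + 5"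
proof -
  define M where "M = Suc (n div 5)"
  define S where "S = {j. 1 \<le> j \<and> j \<le> 5 * M \<and> floor_jump a ((j - 1) div 5)}"
  have "5 * (n div 5) + n mod 5 = n" "n mod 5 < 5" by simp_all
  then have M: "n \<le> 5 * M" "real (5 * M) \<le> real n + 5"
    unfolding M_def by auto
  have "Ppre (extremal_word a) n \<subseteq> Suc ` S"
  proof
    fix i assume i: "i \<in> Ppre (extremal_word a) n"
    then have "i - 1 \<in> S"
      using Ppre_extremal_word_floor_jump[OF i] Ppre_pred_in_Zpre[OF i] M(1)
      by (simp add: S_def Zpre_def numeral_2_eq_2)
    with Ppre_pred_in_Zpre[OF i] show "i \<in> Suc ` S" by blast
  qed
  moreover have "finite S"
    by (auto simp: S_def intro: finite_subset[of _ "{..5 * M}"])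
  ultimately have "card (Ppre (extremal_word a) n) \<le> card S"
    by (meson card_image_le card_mono finite_imageI le_trans)
  also have "int (card S) = 5 * \<lfloor>a * real M\<rfloor>"
    unfolding S_def by (rule card_floor_jump_blocks[OF assms])
  finally have "real (card (Ppre (extremal_word a) n)) \<le> a * real (5 * M)"
    using of_int_floor_le[of "a * real M"] by linarith
  also have "\<dots> \<le> a * (real n + 5)"
    using M(2) assms(1) by (rule mult_left_mono)
  finally show ?thesis
    using assms by (simp add: algebra_simps)
qed

lemma extremal_word_densities:
  assumes "2/5 \<le> r" "r \<le> 1"
  defines "a \<equiv> (5 * r - 2) / 3"
  shows "r_inf (extremal_word a) = ereal r \<and> r_sup (extremal_word a) = ereal r
    \<and> R_inf (extremal_word a) = ereal a \<and> R_sup (extremal_word a) = ereal a"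
proof -
  let ?w = "extremal_word a"
  have a: "0 \<le> a" "a \<le> 1" using assms by (simp_all add: a_def)
  have "\<bar>real (card (Zpre ?w n)) - r * n\<bar> \<le> 8" for n
  proof -
    define M where "M = n div 5"
    have "real (card (Zpre ?w (5 * M))) = 2 * real M + 3 * real_of_int \<lfloor>a * real M\<rfloor>"
      using arg_cong[OF card_Zpre_extremal_word[OF a, of M], of real_of_int] by simp
    moreover have "r * real (5 * M) = 2 * real M + 3 * (a * real M)"
      by (simp add: a_def field_simps)
    ultimately have "\<bar>real (card (Zpre ?w (5 * M))) - r * real (5 * M)\<bar> \<le> 3"
      using of_int_floor_le[of "a * M"] real_of_int_floor_add_one_gt[of "a * M"] by linarith
    moreover have "real (n - 5 * M) \<le> 4" by (simp add: M_def)
    ultimately show ?thesis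
      using Zpre_deviation_le[of "5 * M" n r ?w] assms by (simp add: M_def)
  qed
  then have r: "r_inf ?w = ereal r" "r_sup ?w = ereal r"
    unfolding r_inf_def r_sup_def by (rule ratio_limits_eq, intro lim_const_over_n)+
  have "real (card (Ppre ?w n)) / real n \<le> a + 5 / real n" for n
    using card_Ppre_extremal_word_le[OF a, of n] a
    by (cases "n = 0") (simp_all add: field_simps)
  then have "R_sup ?w \<le> limsup (\<lambda>n. ereal a)"
    unfolding R_sup_def by (rule limsup_mono_up_to_null) (rule lim_const_over_n)
  also have "\<dots> = ereal a"
    by (rule Limsup_const) simp
  finally have upper: "R_sup ?w \<le> ereal a" .
  have "(5 * r_inf ?w - 2) / 3 = ereal a"
    unfolding r(1) by (simp add: a_def)
  then have lower: "ereal a \<le> R_inf ?w"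
    using density_bounds[of ?w] by simp
  have "R_inf ?w \<le> R_sup ?w"
    unfolding R_inf_def R_sup_def by (rule Liminf_le_Limsup) simp
  with upper lower r show ?thesis
    by auto
qed

section \<open>A word attaining the upper bound\<close>

definition block_zeros :: "real \<Rightarrow> nat \<Rightarrow> nat" where
  "block_zeros r k = nat (\<lfloor>r * real ((Suc k)\<^sup>2)\<rfloor> - \<lfloor>r * real (k\<^sup>2)\<rfloor>)"

text \<open>Block \<open>k\<close>, i.e. positions \<open>k\<^sup>2+1, \<dots>, (k+1)\<^sup>2\<close>, is a run of \<open>block_zeros r k\<close> zeros followed
  by ones; so the prefixes of square length have exactly \<open>\<lfloor>r K\<^sup>2\<rfloor>\<close> zeros, and there are
  only \<open>O(\<surd>n)\<close> runs in a prefix of length \<open>n\<close>.\<close>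
definition square_block_word :: "real \<Rightarrow> nat \<Rightarrow> bool" where
  "square_block_word r i \<longleftrightarrow> (floor_sqrt (i - 1))\<^sup>2 + block_zeros r (floor_sqrt (i - 1)) < i"

lemma block_zeros_floor_diff:
  assumes "0 \<le> r" "r \<le> 1"
  shows "int (block_zeros r k) = \<lfloor>r * real ((Suc k)\<^sup>2)\<rfloor> - \<lfloor>r * real (k\<^sup>2)\<rfloor>"
    and "block_zeros r k \<le> 2 * k + 1"
proof -
  have sq: "real ((Suc k)\<^sup>2) = real (k\<^sup>2) + real (2 * k + 1)"
    by (simp add: power2_eq_square algebra_simps)
  have "\<lfloor>r * real (k\<^sup>2)\<rfloor> \<le> \<lfloor>r * real ((Suc k)\<^sup>2)\<rfloor>"
    using assms by (intro floor_mono mult_left_mono) (simp_all add: sq)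
  then show "int (block_zeros r k) = \<lfloor>r * real ((Suc k)\<^sup>2)\<rfloor> - \<lfloor>r * real (k\<^sup>2)\<rfloor>"
    by (simp add: block_zeros_def)
  have "r * real (2 * k + 1) \<le> real (2 * k + 1)"
    using assms by (intro mult_left_le_one_le) auto
  then have "r * real ((Suc k)\<^sup>2) \<le> r * real (k\<^sup>2) + real (2 * k + 1)"
    unfolding sq distrib_left by linarith
  then have "\<lfloor>r * real ((Suc k)\<^sup>2)\<rfloor> \<le> \<lfloor>r * real (k\<^sup>2)\<rfloor> + int (2 * k + 1)"
    by (metis floor_add_int floor_mono of_int_of_nat_eq)
  then show "block_zeros r k \<le> 2 * k + 1"
    by (simp add: block_zeros_def)
qed

lemma square_block_word_block:
  assumes "t \<le> 2 * k"
  shows "square_block_word r (Suc (k\<^sup>2 + t)) \<longleftrightarrow> block_zeros r k \<le> t"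
proof -
  have "floor_sqrt (k\<^sup>2 + t) = k"
    using assms by (intro floor_sqrt_unique) (simp_all add: power2_eq_square)
  then show ?thesis
    by (simp add: square_block_word_def less_Suc_eq_le)
qed

lemma card_Zpre_square_block_word:
  assumes "0 \<le> r" "r \<le> 1"
  shows "int (card (Zpre (square_block_word r) (K\<^sup>2))) = \<lfloor>r * real (K\<^sup>2)\<rfloor>"
proof (induction K)
  case (Suc K)
  have sq: "(Suc K)\<^sup>2 = K\<^sup>2 + (2 * K + 1)" by (simp add: power2_eq_square)
  have "{t. t < 2 * K + 1 \<and> zero_at (square_block_word r) (K\<^sup>2 + t + 1)} = {..<block_zeros r K}"
    using block_zeros_floor_diff(2)[OF assms, of K] by (auto simp: zero_at_def square_block_word_block)
  then have "card (Zpre (square_block_word r) ((Suc K)\<^sup>2))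
      = card (Zpre (square_block_word r) (K\<^sup>2)) + block_zeros r K"
    unfolding Zpre_def sq card_Collect_le_add by simp
  then show ?case
    using Suc block_zeros_floor_diff(1)[OF assms, of K] by simp
qed (simp add: Zpre_def)

lemma square_block_word_ascent:
  assumes r: "0 \<le> r" "r \<le> 1"
    and j: "1 \<le> j" "\<not> square_block_word r j" "square_block_word r (Suc j)"
  defines "k \<equiv> floor_sqrt (j - 1)"
  shows "j = k\<^sup>2 + block_zeros r k"
proof -
  define t where "t = j - 1 - k\<^sup>2"
  have "k\<^sup>2 \<le> j - 1" "j - 1 < (Suc k)\<^sup>2"
    unfolding k_def by (rule floor_sqrt_power2_le, rule Suc_floor_sqrt_power2_gt)
  then have jt: "j = Suc (k\<^sup>2 + t)" and t: "t \<le> 2 * k"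
    using j(1) by (simp_all add: t_def power2_eq_square)
  have "t < block_zeros r k"
    using j(2) t by (simp add: jt square_block_word_block)
  moreover have "block_zeros r k \<le> Suc t"
  proof (cases "t < 2 * k")
    case True
    then show ?thesis
      using j(3) square_block_word_block[of "Suc t" k r] by (simp add: jt)
  next
    case False
    then show ?thesis
      using t block_zeros_floor_diff(2)[OF r, of k] by simp
  qed
  ultimately show ?thesis
    by (simp add: jt)
qed

lemma square_block_word_deviation:
  assumes r: "0 \<le> r" "r \<le> 1" and n: "1 \<le> n"
  shows "\<bar>real (card (Zpre (square_block_word r) n)) - r * n\<bar> \<le> 6 * sqrt n"
    and "\<bar>real (card (Ppre (square_block_word r) n)) - r * n\<bar> \<le> 6 * sqrt n"
proof -
  let ?w = "square_block_word r"
  define K where "K = floor_sqrt n"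
  have "K\<^sup>2 \<le> n" "n < (Suc K)\<^sup>2"
    unfolding K_def by (rule floor_sqrt_power2_le, rule Suc_floor_sqrt_power2_gt)
  then have gap: "n - K\<^sup>2 \<le> 2 * K"
    by (simp add: power2_eq_square)
  have K: "real K \<le> sqrt n"
    using \<open>K\<^sup>2 \<le> n\<close> by (intro real_le_rsqrt) (metis of_nat_le_iff of_nat_power)
  have "\<bar>real (card (Zpre ?w (K\<^sup>2))) - r * real (K\<^sup>2)\<bar> \<le> 1"
    using arg_cong[OF card_Zpre_square_block_word[OF r, of K], of real_of_int]
      of_int_floor_le[of "r * K\<^sup>2"] real_of_int_floor_add_one_gt[of "r * K\<^sup>2"]
    by simp linarith
  then have Z: "\<bar>real (card (Zpre ?w n)) - r * n\<bar> \<le> 2 * real K + 1"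
    using Zpre_deviation_le[OF \<open>K\<^sup>2 \<le> n\<close> r, of ?w] gap by linarith
  define A where "A = {j. 1 \<le> j \<and> j < n \<and> \<not> ?w j \<and> ?w (Suc j)}"
  have "A \<subseteq> (\<lambda>k. k\<^sup>2 + block_zeros r k) ` {..K}"
  proof
    fix j assume "j \<in> A"
    then have "j = (floor_sqrt (j - 1))\<^sup>2 + block_zeros r (floor_sqrt (j - 1))"
      and "floor_sqrt (j - 1) \<le> K"
      using square_block_word_ascent[OF r] by (auto simp: A_def K_def intro: mono_floor_sqrt')
    then show "j \<in> (\<lambda>k. k\<^sup>2 + block_zeros r k) ` {..K}" by blast
  qed
  then have "card A \<le> card ((\<lambda>k. k\<^sup>2 + block_zeros r k) ` {..K})"
    by (intro card_mono) simp_all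
  also have "\<dots> \<le> K + 1"
    using card_image_le[of "{..K}" "\<lambda>k. k\<^sup>2 + block_zeros r k"] by simp
  finally have "real (card (Zpre ?w n)) \<le> real (card (Ppre ?w n)) + real K + 2"
    using card_Zpre_le_card_Ppre_plus_ascents[of ?w n] unfolding A_def[symmetric] by linarith
  moreover have "real (card (Ppre ?w n)) \<le> real (card (Zpre ?w n))"
    using card_Ppre_le_card_Zpre[of ?w n] by simp
  moreover have "1 \<le> sqrt n"
    using n by simp
  ultimately show "\<bar>real (card (Zpre ?w n)) - r * n\<bar> \<le> 6 * sqrt n"
    and "\<bar>real (card (Ppre ?w n)) - r * n\<bar> \<le> 6 * sqrt n"
    using Z K by linarith+
qed

lemma square_block_word_densities:
  assumes "0 \<le> r" "r \<le> 1"
  shows "r_inf (square_block_word r) = ereal r \<and> r_sup (square_block_word r) = ereal r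
    \<and> R_inf (square_block_word r) = ereal r \<and> R_sup (square_block_word r) = ereal r"
  unfolding r_inf_def r_sup_def R_inf_def R_sup_def
  using ratio_limits_eq[OF square_block_word_deviation(1)[OF assms] sqrt_over_n_tendsto_0]
    ratio_limits_eq[OF square_block_word_deviation(2)[OF assms] sqrt_over_n_tendsto_0]
  by simp

theorem theorem3p1:
  shows "(\<forall>w :: nat \<Rightarrow> bool.
            (5 * r_inf w - 2) / 3 \<le> R_inf w \<and> R_inf w \<le> r_inf w \<and>
            (5 * r_sup w - 2) / 3 \<le> R_sup w \<and> R_sup w \<le> r_sup w)
       \<and> (\<forall>r :: real. 2/5 \<le> r \<and> r \<le> 1 \<longrightarrow>
            (\<exists>w :: nat \<Rightarrow> bool. r_inf w = ereal r \<and> r_sup w = ereal r \<and>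
               R_inf w = ereal ((5 * r - 2) / 3) \<and> R_sup w = ereal ((5 * r - 2) / 3)))
       \<and> (\<forall>r :: real. 0 \<le> r \<and> r \<le> 1 \<longrightarrow>
            (\<exists>w :: nat \<Rightarrow> bool. r_inf w = ereal r \<and> r_sup w = ereal r \<and>
               R_inf w = ereal r \<and> R_sup w = ereal r))"
  using density_bounds extremal_word_densities square_block_word_densities by blast

end
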